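(* Let $S\subset\mathbb{R}^q$ be compact, let $s\in S$, let $c_1,\dots,c_M\in S$, and let $(\xi_k)_{k\in\mathbb{N}}\subset\mathbb{R}^q$ be bounded. Suppose $\ell(x,\xi)=\rho(\|x-\xi\|)$ where $\rho:[0,\infty)\to(0,1)$ is continuous and injective. Then for every $\delta>0$ there exists $\epsilon\in(0,1)$ such that for all $k\in\mathbb{N}$ and all $i\in\{1,\dots,M\}$, $$\big|\,\|\xi_k-s\|-\|\xi_k-c_i\|\,\big|\ge\delta\implies|\ell(s,\xi_k)-\ell(c_i,\xi_k)|\ge\epsilon.$$ *)

theory Defs
  imports "HOL-Analysis.Analysis"
begin

end

theory Submission
  imports Defs
begin

text \<open>A continuous injection on a compact set has a uniformly continuous inverse, so points
  that are \<delta>-apart have images that are \<epsilon>-apart. Apply this to \<rho> on an interval [0, R]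
  containing every distance from a sample \<xi> k to a point of S.\<close>

lemma compact_continuous_inj_on_separates:
  fixes f :: "'a::metric_space \<Rightarrow> 'b::metric_space"
  assumes "compact T" "continuous_on T f" "inj_on f T" "\<delta> > 0"
  obtains \<epsilon> where "\<epsilon> > 0"
    "\<And>x y. x \<in> T \<Longrightarrow> y \<in> T \<Longrightarrow> \<delta> \<le> dist x y \<Longrightarrow> \<epsilon> \<le> dist (f x) (f y)"
proof -
  let ?g = "the_inv_into T f"
  have "uniformly_continuous_on (f ` T) ?g"
    using assms by (intro compact_uniformly_continuous continuous_on_inv_into compact_continuous_image)
  then obtain \<epsilon> where "\<epsilon> > 0"
    and close: "\<And>u v. u \<in> f ` T \<Longrightarrow> v \<in> f ` T \<Longrightarrow> dist v u < \<epsilon> \<Longrightarrow> dist (?g v) (?g u) < \<delta>"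
    using \<open>\<delta> > 0\<close> unfolding uniformly_continuous_on_def by metis
  have "\<epsilon> \<le> dist (f x) (f y)" if "x \<in> T" "y \<in> T" "\<delta> \<le> dist x y" for x y
    using close[of "f y" "f x"] that the_inv_into_f_f[OF \<open>inj_on f T\<close>] by fastforce
  with \<open>\<epsilon> > 0\<close> show thesis by (rule that)
qed

lemma bounded_dist_to_compact:
  fixes \<xi> :: "nat \<Rightarrow> 'a::real_normed_vector"
  assumes "bounded (range \<xi>)" "compact S"
  obtains R where "\<And>k x. x \<in> S \<Longrightarrow> norm (\<xi> k - x) \<le> R"
proof -
  obtain B where "\<And>k. norm (\<xi> k) \<le> B"
    using assms(1) unfolding bounded_iff by auto
  moreover obtain C where "\<And>x. x \<in> S \<Longrightarrow> norm x \<le> C"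
    using compact_imp_bounded[OF assms(2)] unfolding bounded_iff by auto
  ultimately have "norm (\<xi> k - x) \<le> B + C" if "x \<in> S" for k x
    using norm_triangle_ineq4[of "\<xi> k" x] that by (smt (verit))
  then show thesis by (rule that)
qed

theorem lemma1:
  fixes S :: "'a::euclidean_space set"
    and s :: 'a and c :: "nat \<Rightarrow> 'a" and M :: nat
    and \<xi> :: "nat \<Rightarrow> 'a"
    and \<rho> :: "real \<Rightarrow> real"
    and ell :: "'a \<Rightarrow> 'a \<Rightarrow> real"
  assumes "compact S"
    and "s \<in> S"
    and "\<And>i. i \<in> {1..M} \<Longrightarrow> c i \<in> S"
    and "bounded (range \<xi>)"
    and "continuous_on {0..} \<rho>"
    and "inj_on \<rho> {0..}"
    and "\<rho> ` {0..} \<subseteq> {0<..<1}"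
    and "\<And>x y. ell x y = \<rho> (norm (x - y))"
  shows "\<forall>\<delta>>0. \<exists>\<epsilon>. 0 < \<epsilon> \<and> \<epsilon> < 1 \<and>
           (\<forall>k i. i \<in> {1..M} \<longrightarrow>
              \<bar>norm (\<xi> k - s) - norm (\<xi> k - c i)\<bar> \<ge> \<delta> \<longrightarrow>
              \<bar>ell s (\<xi> k) - ell (c i) (\<xi> k)\<bar> \<ge> \<epsilon>)"
proof (intro allI impI)
  fix \<delta> :: real assume "\<delta> > 0"
  obtain R where R: "\<And>k x. x \<in> S \<Longrightarrow> norm (\<xi> k - x) \<le> R"
    using bounded_dist_to_compact[OF assms(4,1)] by blast
  have "continuous_on {0..R} \<rho>" "inj_on \<rho> {0..R}"
    using assms(5,6) by (auto intro: continuous_on_subset inj_on_subset)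
  then obtain \<epsilon> where "\<epsilon> > 0" and sep:
      "\<And>x y. x \<in> {0..R} \<Longrightarrow> y \<in> {0..R} \<Longrightarrow> \<delta> \<le> \<bar>x - y\<bar> \<Longrightarrow> \<epsilon> \<le> \<bar>\<rho> x - \<rho> y\<bar>"
    using compact_continuous_inj_on_separates[OF compact_Icc _ _ \<open>\<delta> > 0\<close>, of 0 R \<rho>]
    unfolding dist_real_def by blast
  have ell_\<xi>: "ell x (\<xi> k) = \<rho> (norm (\<xi> k - x))" for x k
    using assms(8) norm_minus_commute by metis
  show "\<exists>\<epsilon>. 0 < \<epsilon> \<and> \<epsilon> < 1 \<and>
           (\<forall>k i. i \<in> {1..M} \<longrightarrow>
              \<bar>norm (\<xi> k - s) - norm (\<xi> k - c i)\<bar> \<ge> \<delta> \<longrightarrow>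
              \<bar>ell s (\<xi> k) - ell (c i) (\<xi> k)\<bar> \<ge> \<epsilon>)"
  proof (intro exI[of _ "min \<epsilon> (1/2)"] conjI allI impI)
    fix k i assume "i \<in> {1..M}" "\<bar>norm (\<xi> k - s) - norm (\<xi> k - c i)\<bar> \<ge> \<delta>"
    then show "\<bar>ell s (\<xi> k) - ell (c i) (\<xi> k)\<bar> \<ge> min \<epsilon> (1/2)"
      using sep[of "norm (\<xi> k - s)" "norm (\<xi> k - c i)"] R[OF assms(2)] R[OF assms(3)]
      by (force simp: ell_\<xi>)
  qed (use \<open>\<epsilon> > 0\<close> in auto)
qed

end
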